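(* Let $P$ be a probability measure on $(\Omega,\mathcal A)$, let $\delta\in(\tfrac12,1)$, and let $\bar{\mathbf C}_1,\bar{\mathbf C}_2\subseteq\bar{\mathcal A}$ be C-classes. If $\bar T(P,\delta)\subseteq\bar{\mathbf C}_1\cap\bar{\mathbf C}_2$, then $\bar{\mathbf C}_1\sim\bar{\mathbf C}_2$, i.e. $\bar M_{\bar{\mathbf C}_1}=\bar M_{\bar{\mathbf C}_2}$.
   Context: Let $(\Omega,\mathcal A)$ be a measurable space. For $n\ge1$, $\mathcal A^n$ is the product $\sigma$-algebra on $\Omega^n$; the extended event space is $\bar{\mathcal A}=\bigcup_{n\ge1}\mathcal A^n$, events tagged by their level $n$ (written $A^{(n)}$). For $k\ge1$, $(\Omega^n)^k$ is identified with $\Omega^{nk}$ and $(\mathcal A^n)^k$ with $\mathcal A^{nk}$. For a probability measure $P$ on $\mathcal A$, $P^n$ is its $n$-fold product, $\bar P(A^{(n)})=P^n(A^{(n)})$, and $\bar T(P,\delta)=\{A\in\bar{\mathcal A}:\bar P(A)\ge\delta\}$. For $A^{(n)}\in\mathcal A^n$, an interval $I\subseteq[0,1]$ and $k\in\mathbb N^+$, $S(A^{(n)},I,k)=\{(\omega_1,\dots,\omega_k)\in(\Omega^n)^k:\frac1k\sum_{i=1}^k\chi_{A^{(n)}}(\omega_i)\in I\}$. A class $\bar{\mathbf C}\subseteq\bar{\mathcal A}$ is a C-class if for every $n$ the component $\mathcal C^{(n)}=\bar{\mathbf C}\cap\mathcal A^n$ satisfies: $\Omega^n\in\mathcal C^{(n)}$;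 closed under supersets within $\mathcal A^n$; contains no two disjoint events. "$S(A,I,k)\in\bar{\mathbf C}$ definitively" means there is $k_0$ with $S(A,I,k)\in\bar{\mathbf C}$ for all $k>k_0$. The C-measure of a C-class is $\bar M_{\bar{\mathbf C}}(A)=\sup\{\sigma\in[0,1]: S(A,[\sigma,1],k)\in\bar{\mathbf C}\text{ definitively}\}$. Two C-classes are equivalent, $\bar{\mathbf C}_1\sim\bar{\mathbf C}_2$, if $\bar M_{\bar{\mathbf C}_1}=\bar M_{\bar{\mathbf C}_2}$. *)

theory Defs
  imports "HOL-Probability.Probability"
begin

text \<open>Omega^n with the product sigma-algebra, realised as the product measure over
  coordinates {..<n}.  An extended event A^(n) is a pair (n, A).\<close>

definition PowM :: "'a measure \<Rightarrow> nat \<Rightarrow> (nat \<Rightarrow> 'a) measure" where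
  "PowM M n = PiM {..<n} (\<lambda>_. M)"

type_synonym 'a xevent = "nat \<times> (nat \<Rightarrow> 'a) set"

definition ext_events :: "'a measure \<Rightarrow> 'a xevent set" where
  "ext_events M = {(n, A). n \<ge> 1 \<and> A \<in> sets (PowM M n)}"

definition barP :: "'a measure \<Rightarrow> 'a xevent \<Rightarrow> real" where
  "barP M E = measure (PowM M (fst E)) (snd E)"

definition barT :: "'a measure \<Rightarrow> real \<Rightarrow> 'a xevent set" where
  "barT M \<delta> = {E \<in> ext_events M. barP M E \<ge> \<delta>}"

definition block :: "nat \<Rightarrow> nat \<Rightarrow> (nat \<Rightarrow> 'a) \<Rightarrow> (nat \<Rightarrow> 'a)" where
  "block n i \<omega> = (\<lambda>j\<in>{..<n}. \<omega> (i * n + j))"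

definition Sfreq :: "'a measure \<Rightarrow> 'a xevent \<Rightarrow> real set \<Rightarrow> nat \<Rightarrow> 'a xevent" where
  "Sfreq M E I k = (fst E * k,
     {\<omega> \<in> space (PowM M (fst E * k)).
        (1 / real k) * (\<Sum>i<k. indicator (snd E) (block (fst E) i \<omega>)) \<in> I})"

definition C_class :: "'a measure \<Rightarrow> 'a xevent set \<Rightarrow> bool" where
  "C_class M C \<longleftrightarrow> C \<subseteq> ext_events M \<and>
     (\<forall>n\<ge>1. (n, space (PowM M n)) \<in> C
        \<and> (\<forall>A B. (n, A) \<in> C \<and> B \<in> sets (PowM M n) \<and> A \<subseteq> B \<longrightarrow> (n, B) \<in> C)
        \<and> (\<forall>A B. (n, A) \<in> C \<and> (n, B) \<in> C \<longrightarrow> A \<inter> B \<noteq> {}))"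

definition C_measure :: "'a measure \<Rightarrow> 'a xevent set \<Rightarrow> 'a xevent \<Rightarrow> real" where
  "C_measure M C E = Sup {\<sigma> \<in> {0..1}. \<exists>k0. \<forall>k>k0. Sfreq M E {\<sigma>..1} k \<in> C}"

definition C_equiv :: "'a measure \<Rightarrow> 'a xevent set \<Rightarrow> 'a xevent set \<Rightarrow> bool" where
  "C_equiv M C1 C2 \<longleftrightarrow> (\<forall>E \<in> ext_events M. C_measure M C1 E = C_measure M C2 E)"

end

theory Submission
  imports Defs
begin

text \<open>The \<open>k\<close> blocks of a point of \<open>\<Omega>\<^sup>n\<^sup>k\<close> are independent with law \<open>P\<^sup>n\<close>, so by
  Hoeffding's inequality the block frequency of an event \<open>A\<close> of level \<open>n\<close> concentrates at
  \<open>p = P\<^sup>n(A)\<close>. Hence for \<open>\<sigma> < p\<close> the event \<open>S(A, [\<sigma>,1], k)\<close>, and for \<open>\<sigma> > p\<close> the disjoint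
  event "frequency below \<open>\<sigma>\<close>", eventually has probability at least \<open>\<delta>\<close> and so lies in any
  C-class containing \<open>T(P,\<delta>)\<close>. As a C-class contains no two disjoint events, the C-measure of
  every such class is \<open>barP\<close> itself.\<close>

lemma prob_space_PowM: "prob_space M \<Longrightarrow> prob_space (PowM M n)"
  unfolding PowM_def by (rule prob_space_PiM) auto

lemma indep_vars_PiM_components:
  assumes M: "prob_space M" and I: "I \<noteq> {}"
  shows "prob_space.indep_vars (PiM I (\<lambda>_. M)) (\<lambda>_. M) (\<lambda>j \<omega>. \<omega> j) I"
proof -
  interpret N: prob_space "PiM I (\<lambda>_. M)" by (rule prob_space_PiM) (use M in auto)
  have "distr (PiM I (\<lambda>_. M)) M (\<lambda>\<omega>. \<omega> j) = M" if "j \<in> I" for j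
    using distr_PiM_component[of I "\<lambda>_. M" j] M that by auto
  then have "PiM I (\<lambda>j. distr (PiM I (\<lambda>_. M)) M (\<lambda>\<omega>. \<omega> j)) = PiM I (\<lambda>_. M)"
    by (intro PiM_cong) auto
  moreover have "distr (PiM I (\<lambda>_. M)) (PiM I (\<lambda>_. M)) (\<lambda>\<omega>. \<lambda>j\<in>I. \<omega> j) = PiM I (\<lambda>_. M)"
    by (subst distr_cong[where g = "\<lambda>\<omega>. \<omega>"])
       (auto simp: space_PiM PiE_def extensional_restrict)
  ultimately show ?thesis
    by (subst N.indep_vars_iff_distr_eq_PiM'[OF I]) auto
qed

lemma block_end_le:
  fixes i k n :: nat
  assumes "i < k" shows "i * n + n \<le> k * n"
  using mult_le_mono1[OF Suc_leI[OF assms], of n] by (simp add: add.commute)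

lemma block_index_less:
  fixes i j k n :: nat
  assumes "i < k" "j < n" shows "i * n + j < n * k"
  using block_end_le[OF assms(1), of n] assms(2) by (simp add: mult.commute)

lemma measurable_block:
  assumes "i < k"
  shows "block n i \<in> measurable (PowM M (n * k)) (PowM M n)"
  unfolding block_def PowM_def
  by (intro measurable_restrict measurable_component_singleton)
     (auto intro: block_index_less[OF assms])

lemma distr_block:
  assumes M: "prob_space M" and "i < k"
  shows "distr (PowM M (n * k)) (PowM M n) (block n i) = PowM M n"
proof -
  have "(\<lambda>j. i * n + j) \<in> {..<n} \<rightarrow> {..<n * k}" "inj_on (\<lambda>j. i * n + j) {..<n}"
    using block_index_less[OF \<open>i < k\<close>] by (auto simp: inj_on_def)
  then show ?thesis
    unfolding PowM_def block_def
    using distr_PiM_reindex[of "{..<n * k}" "\<lambda>_. M" "\<lambda>j. i * n + j" "{..<n}"] M by auto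
qed

text \<open>The blocks are restrictions of the coordinate process to the disjoint index sets
  \<open>{i * n..<i * n + n}\<close>, followed by a measurable reindexing.\<close>
lemma indep_vars_block:
  assumes M: "prob_space M" and "n \<ge> 1" "k \<ge> 1"
  shows "prob_space.indep_vars (PowM M (n * k)) (\<lambda>_. PowM M n) (block n) {..<k}"
proof -
  interpret N: prob_space "PowM M (n * k)" by (rule prob_space_PowM[OF M])
  define K where "K i = {i * n..<i * n + n}" for i :: nat
  have "0 \<in> {..<n * k}" using assms by simp
  then have "{..<n * k} \<noteq> {}" by blast
  from indep_vars_PiM_components[OF M this]
  have coords: "N.indep_vars (\<lambda>_. M) (\<lambda>j \<omega>. \<omega> j) {..<n * k}"
    unfolding PowM_def .
  have sub: "K i \<subseteq> {..<n * k}" if "i \<in> {..<k}" for i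
    using block_end_le[of i k n] that by (auto simp: K_def mult.commute)
  have "K i \<inter> K i' = {}" if "i < i'" for i i'
    using block_end_le[OF that, of n] by (auto simp: K_def)
  then have disj: "disjoint_family_on K {..<k}"
    unfolding disjoint_family_on_def by (metis Int_commute nat_neq_iff)
  have restr: "N.indep_vars (\<lambda>i. PiM (K i) (\<lambda>_. M)) (\<lambda>i \<omega>. restrict \<omega> (K i)) {..<k}"
    using N.indep_vars_restrict[OF coords sub disj] by simp
  define shift where "shift i f = (\<lambda>j\<in>{..<n}. f (i * n + j))" for i and f :: "nat \<Rightarrow> 'a"
  have "N.indep_vars (\<lambda>_. PowM M n) (\<lambda>i \<omega>. shift i (restrict \<omega> (K i))) {..<k}"
  proof (rule N.indep_vars_compose2[OF restr])
    show "shift i \<in> measurable (PiM (K i) (\<lambda>_. M)) (PowM M n)" for i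
      unfolding shift_def PowM_def
      by (intro measurable_restrict measurable_component_singleton) (auto simp: K_def)
  qed
  moreover have "(\<lambda>i \<omega>. shift i (restrict \<omega> (K i))) = block n"
    by (auto simp: fun_eq_iff block_def K_def shift_def)
  ultimately show ?thesis by simp
qed

definition block_freq :: "nat \<Rightarrow> (nat \<Rightarrow> 'a) set \<Rightarrow> nat \<Rightarrow> (nat \<Rightarrow> 'a) \<Rightarrow> real" where
  "block_freq n A k \<omega> = (\<Sum>i<k. indicator A (block n i \<omega>)) / real k"

lemma Sfreq_eq_block_freq:
  "Sfreq M (n, A) I k = (n * k, {\<omega> \<in> space (PowM M (n * k)). block_freq n A k \<omega> \<in> I})"
  by (simp add: Sfreq_def block_freq_def)

lemma block_freq_bounds: "block_freq n A k \<omega> \<in> {0..1}"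
proof -
  have "(\<Sum>i<k. indicator A (block n i \<omega>)) \<le> (\<Sum>i<k. 1::real)"
    by (intro sum_mono) (auto simp: indicator_def)
  moreover have "(\<Sum>i<k. indicator A (block n i \<omega>)) \<ge> (0::real)"
    by (intro sum_nonneg) auto
  ultimately show ?thesis
    by (cases "k = 0") (auto simp: block_freq_def divide_le_eq_1)
qed

lemma borel_measurable_block_freq:
  assumes "A \<in> sets (PowM M n)"
  shows "block_freq n A k \<in> borel_measurable (PowM M (n * k))"
  unfolding block_freq_def
  by (intro borel_measurable_divide borel_measurable_const borel_measurable_sum
      measurable_compose[OF measurable_block borel_measurable_indicator[OF assms]]) auto

lemma prob_block_freq_deviation:
  assumes M: "prob_space M" and "n \<ge> 1" and A: "A \<in> sets (PowM M n)" and "k \<ge> 1" "\<epsilon> \<ge> 0"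
  shows "measure (PowM M (n * k))
      {\<omega> \<in> space (PowM M (n * k)). \<bar>block_freq n A k \<omega> - measure (PowM M n) A\<bar> \<ge> \<epsilon>}
    \<le> 2 * exp (- 2 * real k * \<epsilon>\<^sup>2)"
proof -
  interpret N: prob_space "PowM M (n * k)" by (rule prob_space_PowM[OF M])
  define X :: "nat \<Rightarrow> (nat \<Rightarrow> 'a) \<Rightarrow> real" where "X i \<omega> = indicator A (block n i \<omega>)" for i \<omega>
  have X_measurable: "X i \<in> borel_measurable (PowM M (n * k))" if "i < k" for i
    unfolding X_def by (rule measurable_compose[OF measurable_block[OF that]]) (use A in simp)
  have distr_X: "distr (PowM M (n * k)) borel (X i) = distr (PowM M n) borel (indicator A)"
    if "i < k" for i
  proof -
    have "distr (PowM M (n * k)) borel (X i)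
        = distr (distr (PowM M (n * k)) (PowM M n) (block n i)) borel (indicator A)"
      using A measurable_block[OF that] by (subst distr_distr) (auto simp: X_def[abs_def] comp_def)
    then show ?thesis by (simp add: distr_block[OF M that])
  qed
  have "0 < k" using \<open>k \<ge> 1\<close> by simp
  interpret H: Hoeffding_ineq_iid "PowM M (n * k)" "{..<k}" X "X 0" 0 1 "N.expectation (X 0)"
  proof unfold_locales
    show "N.indep_vars (\<lambda>_. borel) X {..<k}"
      unfolding X_def
      by (rule N.indep_vars_compose2[OF indep_vars_block[OF M \<open>n \<ge> 1\<close> \<open>k \<ge> 1\<close>]]) (use A in simp)
  qed (use \<open>0 < k\<close> distr_X X_measurable in \<open>auto simp: X_def\<close>)
  have "N.expectation (X 0)
      = integral\<^sup>L (distr (PowM M (n * k)) (PowM M n) (block n 0)) (indicator A)"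
    unfolding X_def using A measurable_block[OF \<open>0 < k\<close>] by (subst integral_distr) auto
  also have "\<dots> = measure (PowM M n) A"
    using A by (simp add: distr_block[OF M \<open>0 < k\<close>])
  finally have "block_freq n A k \<omega> - measure (PowM M n) A
      = (\<Sum>i\<in>{..<k}. X i \<omega>) / real (card {..<k}) - N.expectation (X 0)" for \<omega>
    by (simp add: block_freq_def X_def)
  moreover have nonempty: "{..<k} \<noteq> {}" using \<open>0 < k\<close> by auto
  moreover note H.Hoeffding_ineq_abs_ge'[OF \<open>\<epsilon> \<ge> 0\<close> zero_less_one nonempty]
  ultimately show ?thesis by (simp only: card_lessThan) simp
qed

lemma block_freq_weak_law:
  assumes M: "prob_space M" and "n \<ge> 1" and A: "A \<in> sets (PowM M n)" and "\<epsilon> > 0"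
  shows "(\<lambda>k. measure (PowM M (n * k))
      {\<omega> \<in> space (PowM M (n * k)). \<bar>block_freq n A k \<omega> - measure (PowM M n) A\<bar> \<ge> \<epsilon>})
    \<longlonglongrightarrow> 0"
proof (rule tendsto_sandwich[OF _ _ tendsto_const])
  have "exp (- 2 * real k * \<epsilon>\<^sup>2) = exp (- 2 * \<epsilon>\<^sup>2) ^ k" for k
    by (simp add: exp_of_nat_mult[symmetric] mult_ac)
  moreover have "(\<lambda>k. exp (- 2 * \<epsilon>\<^sup>2) ^ k) \<longlonglongrightarrow> 0"
    using \<open>\<epsilon> > 0\<close> by (intro LIMSEQ_power_zero) simp
  ultimately show "(\<lambda>k. 2 * exp (- 2 * real k * \<epsilon>\<^sup>2)) \<longlonglongrightarrow> 0"
    using tendsto_mult_right_zero by auto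
  show "\<forall>\<^sub>F k in sequentially. measure (PowM M (n * k))
      {\<omega> \<in> space (PowM M (n * k)). \<bar>block_freq n A k \<omega> - measure (PowM M n) A\<bar> \<ge> \<epsilon>}
    \<le> 2 * exp (- 2 * real k * \<epsilon>\<^sup>2)"
    using eventually_ge_at_top[of 1]
    by eventually_elim (use prob_block_freq_deviation[OF M \<open>n \<ge> 1\<close> A] \<open>\<epsilon> > 0\<close> in auto)
qed simp

lemma eventually_prob_block_freq_ge:
  assumes M: "prob_space M" and "n \<ge> 1" and A: "A \<in> sets (PowM M n)"
    and "\<delta> < 1" and "\<epsilon> > 0" and U: "U \<in> sets borel"
    and near: "\<And>x. x \<in> {0..1} \<Longrightarrow> \<bar>x - measure (PowM M n) A\<bar> < \<epsilon> \<Longrightarrow> x \<in> U"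
  shows "\<forall>\<^sub>F k in sequentially.
    \<delta> \<le> measure (PowM M (n * k)) {\<omega> \<in> space (PowM M (n * k)). block_freq n A k \<omega> \<in> U}"
proof -
  define D where "D k = {\<omega> \<in> space (PowM M (n * k)).
    \<bar>block_freq n A k \<omega> - measure (PowM M n) A\<bar> \<ge> \<epsilon>}" for k
  have "\<forall>\<^sub>F k in sequentially. measure (PowM M (n * k)) (D k) < 1 - \<delta>"
    using order_tendstoD(2)[OF block_freq_weak_law[OF M \<open>n \<ge> 1\<close> A \<open>\<epsilon> > 0\<close>]] \<open>\<delta> < 1\<close>
    unfolding D_def by simp
  then show ?thesis
  proof eventually_elim
    case (elim k)
    interpret N: prob_space "PowM M (n * k)" by (rule prob_space_PowM[OF M])
    have measurable: "block_freq n A k \<in> borel_measurable (PowM M (n * k))"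
      by (rule borel_measurable_block_freq[OF A])
    have "space (PowM M (n * k)) - D k
        \<subseteq> {\<omega> \<in> space (PowM M (n * k)). block_freq n A k \<omega> \<in> U}"
      using near[OF block_freq_bounds] by (auto simp: D_def not_le)
    then have "N.prob (space (PowM M (n * k)) - D k)
        \<le> N.prob {\<omega> \<in> space (PowM M (n * k)). block_freq n A k \<omega> \<in> U}"
      using measurable U by (intro N.finite_measure_mono) auto
    moreover have "N.prob (space (PowM M (n * k)) - D k) = 1 - N.prob (D k)"
      using measurable by (intro N.prob_compl) (auto simp: D_def)
    ultimately show ?case using elim by linarith
  qed
qed

lemma ex_all_greater_iff_eventually_sequentially:
  "(\<exists>k0. \<forall>k>k0. P k) \<longleftrightarrow> (\<forall>\<^sub>F k in sequentially. P k)"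
  unfolding eventually_sequentially by (metis Suc_le_eq le_simps(3) less_imp_le_nat)

lemma C_class_space:
  "C_class M C \<Longrightarrow> n \<ge> 1 \<Longrightarrow> (n, space (PowM M n)) \<in> C"
  unfolding C_class_def by blast

lemma C_class_not_disjoint:
  "C_class M C \<Longrightarrow> (n, A) \<in> C \<Longrightarrow> (n, B) \<in> C \<Longrightarrow> A \<inter> B \<noteq> {}"
  unfolding C_class_def ext_events_def by blast

lemma eventually_Sfreq_in_C_class:
  assumes M: "prob_space M" and "\<delta> < 1" and C: "C_class M C" and T: "barT M \<delta> \<subseteq> C"
    and E: "(n, A) \<in> ext_events M" and "\<epsilon> > 0" and U: "U \<in> sets borel"
    and near: "\<And>x. x \<in> {0..1} \<Longrightarrow> \<bar>x - barP M (n, A)\<bar> < \<epsilon> \<Longrightarrow> x \<in> U"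
  shows "\<forall>\<^sub>F k in sequentially. Sfreq M (n, A) U k \<in> C"
proof -
  have "n \<ge> 1" and A: "A \<in> sets (PowM M n)" using E by (auto simp: ext_events_def)
  have "\<forall>\<^sub>F k in sequentially.
      \<delta> \<le> measure (PowM M (n * k)) {\<omega> \<in> space (PowM M (n * k)). block_freq n A k \<omega> \<in> U}"
    using near by (intro eventually_prob_block_freq_ge[OF M \<open>n \<ge> 1\<close> A \<open>\<delta> < 1\<close> \<open>\<epsilon> > 0\<close> U])
      (auto simp: barP_def)
  with eventually_ge_at_top[of 1] show ?thesis
  proof eventually_elim
    case (elim k)
    then have "Sfreq M (n, A) U k \<in> barT M \<delta>"
      using \<open>n \<ge> 1\<close> measurable_sets[OF borel_measurable_block_freq[OF A] U]
      by (auto simp: Sfreq_eq_block_freq barT_def barP_def ext_events_def vimage_def Int_def conj_commute)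
    then show ?case using T by blast
  qed
qed

lemma cSup_eq_if_atLeastLessThan_subset:
  fixes S :: "real set"
  assumes "{0..<p} \<subseteq> S" and "S \<subseteq> {..p}" and "0 \<in> S"
  shows "Sup S = p"
proof (rule antisym)
  show "Sup S \<le> p" using assms by (intro cSup_least) auto
  have bdd: "bdd_above S" using assms(2) by (auto intro: bdd_aboveI)
  show "p \<le> Sup S"
  proof (cases "p = 0")
    case True
    then show ?thesis using cSup_upper[OF \<open>0 \<in> S\<close> bdd] by simp
  next
    case False
    then have "0 < p" using assms(2,3) by force
    then show ?thesis
      by (rule dense_le_bounded) (meson assms(1) atLeastLessThan_iff bdd cSup_upper less_imp_le subsetD)
  qed
qed

lemma C_measure_eq_barP:
  assumes M: "prob_space M" and "\<delta> < 1" and C: "C_class M C" and T: "barT M \<delta> \<subseteq> C"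
    and E: "E \<in> ext_events M"
  shows "C_measure M C E = barP M E"
proof -
  obtain n A where E_eq: "E = (n, A)" and "n \<ge> 1" using E by (auto simp: ext_events_def)
  define p where "p = barP M E"
  define S where "S = {\<sigma> \<in> {0..1}. \<forall>\<^sub>F k in sequentially. Sfreq M E {\<sigma>..1} k \<in> C}"
  have below: "\<sigma> \<in> S" if "0 \<le> \<sigma>" "\<sigma> < p" for \<sigma>
  proof -
    have "p \<le> 1" using M by (simp add: p_def barP_def prob_space.prob_le_1 prob_space_PowM)
    moreover have "\<forall>\<^sub>F k in sequentially. Sfreq M E {\<sigma>..1} k \<in> C"
      using that E unfolding E_eq
      by (intro eventually_Sfreq_in_C_class[OF M \<open>\<delta> < 1\<close> C T, where \<epsilon> = "p - \<sigma>"])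
         (auto simp: p_def E_eq)
    ultimately show ?thesis using that by (simp add: S_def)
  qed
  have above: "\<sigma> \<le> p" if "\<sigma> \<in> S" for \<sigma>
  proof (rule ccontr)
    assume "\<not> \<sigma> \<le> p"
    have "\<forall>\<^sub>F k in sequentially. Sfreq M E {..<\<sigma>} k \<in> C"
      using \<open>\<not> \<sigma> \<le> p\<close> E unfolding E_eq
      by (intro eventually_Sfreq_in_C_class[OF M \<open>\<delta> < 1\<close> C T, where \<epsilon> = "\<sigma> - p"])
         (auto simp: p_def E_eq)
    moreover have "\<forall>\<^sub>F k in sequentially. Sfreq M E {\<sigma>..1} k \<in> C"
      using that by (simp add: S_def)
    ultimately have "\<forall>\<^sub>F k in sequentially.
        k \<ge> 1 \<and> Sfreq M E {..<\<sigma>} k \<in> C \<and> Sfreq M E {\<sigma>..1} k \<in> C"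
      using eventually_ge_at_top[of 1] by eventually_elim simp
    then obtain k where "k \<ge> 1" "Sfreq M E {..<\<sigma>} k \<in> C" "Sfreq M E {\<sigma>..1} k \<in> C"
      unfolding eventually_sequentially by blast
    then have "snd (Sfreq M E {..<\<sigma>} k) \<inter> snd (Sfreq M E {\<sigma>..1} k) \<noteq> {}"
      using C_class_not_disjoint[OF C] by (simp add: E_eq Sfreq_eq_block_freq)
    then show False by (auto simp: E_eq Sfreq_eq_block_freq)
  qed
  have "0 \<in> S"
  proof -
    have "Sfreq M E {0..1} k = (n * k, space (PowM M (n * k)))" for k
      using block_freq_bounds by (auto simp: E_eq Sfreq_eq_block_freq)
    then have "\<forall>\<^sub>F k in sequentially. Sfreq M E {0..1} k \<in> C"
      using C_class_space[OF C] \<open>n \<ge> 1\<close>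
      by (intro eventually_mono[OF eventually_ge_at_top[of 1]]) simp
    then show ?thesis by (simp add: S_def)
  qed
  with below above have "Sup S = p" by (intro cSup_eq_if_atLeastLessThan_subset) auto
  then show ?thesis
    by (simp add: C_measure_def S_def p_def ex_all_greater_iff_eventually_sequentially)
qed

theorem mainTheorem7:
  fixes M :: "'a measure" and \<delta> :: real and C1 C2 :: "'a xevent set"
  assumes "prob_space M"
    and "1/2 < \<delta>" and "\<delta> < 1"
    and "C_class M C1" and "C_class M C2"
    and "barT M \<delta> \<subseteq> C1 \<inter> C2"
  shows "C_equiv M C1 C2"
  unfolding C_equiv_def
proof
  fix E assume "E \<in> ext_events M"
  moreover have "barT M \<delta> \<subseteq> C1" "barT M \<delta> \<subseteq> C2" using assms(6) by auto
  ultimately show "C_measure M C1 E = C_measure M C2 E"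
    using C_measure_eq_barP[OF assms(1,3)] assms(4,5) by simp
qed

end
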